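(* Let $A$ be a cubical set. The formula $\forall (i:\mathbb{I})\,\forall(j:\mathbb{I})\,\forall(f:\mathbb{I}\to A).\ f(i)=f(j)$ holds in the internal logic of $\widehat{\mathcal{C}}$ if and only if $A\cong\Delta(a)$ for some set $a$.
   Context: $\mathcal{C}$ is the category of cubes: objects finite sets of names, morphisms $I\to J$ functions $J\to\mathrm{dM}(I)$ with $\mathrm{dM}(I)$ the free De Morgan algebra on $I$, composition by substitution. $\widehat{\mathcal{C}}$ is the presheaf topos of cubical sets; $\mathbb{I}$ is the presheaf $I\mapsto\mathrm{dM}(I)$. $\Delta:\mathrm{Set}\to\widehat{\mathcal{C}}$ is the constant presheaf functor. *)

theory Defs
  imports Main
begin

datatype dmterm =
    DVar nat
  | DZero
  | DOne
  | DMeet dmterm dmterm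
  | DJoin dmterm dmterm
  | DNeg dmterm

fun tvars :: "dmterm \<Rightarrow> nat set" where
  "tvars (DVar i) = {i}"
| "tvars DZero = {}"
| "tvars DOne = {}"
| "tvars (DMeet s t) = tvars s \<union> tvars t"
| "tvars (DJoin s t) = tvars s \<union> tvars t"
| "tvars (DNeg t) = tvars t"

fun tsubst :: "(nat \<Rightarrow> dmterm) \<Rightarrow> dmterm \<Rightarrow> dmterm" where
  "tsubst \<sigma> (DVar i) = \<sigma> i"
| "tsubst \<sigma> DZero = DZero"
| "tsubst \<sigma> DOne = DOne"
| "tsubst \<sigma> (DMeet s t) = DMeet (tsubst \<sigma> s) (tsubst \<sigma> t)"
| "tsubst \<sigma> (DJoin s t) = DJoin (tsubst \<sigma> s) (tsubst \<sigma> t)"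
| "tsubst \<sigma> (DNeg t) = DNeg (tsubst \<sigma> t)"

inductive dm_eq :: "dmterm \<Rightarrow> dmterm \<Rightarrow> bool" where
  refl: "dm_eq t t"
| sym: "dm_eq s t \<Longrightarrow> dm_eq t s"
| trans: "dm_eq s t \<Longrightarrow> dm_eq t u \<Longrightarrow> dm_eq s u"
| cong_meet: "dm_eq s s' \<Longrightarrow> dm_eq t t' \<Longrightarrow> dm_eq (DMeet s t) (DMeet s' t')"
| cong_join: "dm_eq s s' \<Longrightarrow> dm_eq t t' \<Longrightarrow> dm_eq (DJoin s t) (DJoin s' t')"
| cong_neg: "dm_eq s s' \<Longrightarrow> dm_eq (DNeg s) (DNeg s')"
| meet_assoc: "dm_eq (DMeet (DMeet a b) c) (DMeet a (DMeet b c))"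
| join_assoc: "dm_eq (DJoin (DJoin a b) c) (DJoin a (DJoin b c))"
| meet_comm: "dm_eq (DMeet a b) (DMeet b a)"
| join_comm: "dm_eq (DJoin a b) (DJoin b a)"
| absorb_meet: "dm_eq (DMeet a (DJoin a b)) a"
| absorb_join: "dm_eq (DJoin a (DMeet a b)) a"
| distrib: "dm_eq (DMeet a (DJoin b c)) (DJoin (DMeet a b) (DMeet a c))"
| meet_one: "dm_eq (DMeet a DOne) a"
| join_zero: "dm_eq (DJoin a DZero) a"
| neg_neg: "dm_eq (DNeg (DNeg a)) a"
| neg_meet: "dm_eq (DNeg (DMeet a b)) (DJoin (DNeg a) (DNeg b))"
| neg_join: "dm_eq (DNeg (DJoin a b)) (DMeet (DNeg a) (DNeg b))"
| neg_zero: "dm_eq (DNeg DZero) DOne"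

lemma equivp_dm_eq: "equivp dm_eq"
  by (rule equivpI; auto intro: dm_eq.intros simp: reflp_def symp_def transp_def)

quotient_type dm = dmterm / dm_eq
  by (rule equivp_dm_eq)

definition dm_var :: "nat \<Rightarrow> dm" where
  "dm_var i = abs_dm (DVar i)"

text \<open>\<open>dM I\<close>: the free De Morgan algebra on the name set \<open>I\<close>, as the set of classes
  having a representative term with variables in \<open>I\<close>.\<close>

definition dM :: "nat set \<Rightarrow> dm set" where
  "dM I = {abs_dm t | t. tvars t \<subseteq> I}"

definition dm_subst :: "(nat \<Rightarrow> dm) \<Rightarrow> dm \<Rightarrow> dm" where
  "dm_subst \<sigma> x = abs_dm (tsubst (rep_dm \<circ> \<sigma>) (rep_dm x))"

text \<open>Objects: finite sets of names. A morphism \<open>I \<rightarrow> J\<close> is a function \<open>J \<rightarrow> dM I\<close>,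
  represented extensionally (value \<open>undefined\<close> outside \<open>J\<close>).\<close>

definition cube_hom :: "nat set \<Rightarrow> nat set \<Rightarrow> (nat \<Rightarrow> dm) set" where
  "cube_hom I J = {f. (\<forall>j\<in>J. f j \<in> dM I) \<and> (\<forall>j. j \<notin> J \<longrightarrow> f j = undefined)}"

definition cube_id :: "nat set \<Rightarrow> nat \<Rightarrow> dm" where
  "cube_id I = (\<lambda>i. if i \<in> I then dm_var i else undefined)"

text \<open>Composition of \<open>f : I \<rightarrow> J\<close> and \<open>g : J \<rightarrow> K\<close> (i.e. \<open>g \<circ> f : I \<rightarrow> K\<close>), by substitution.\<close>

definition cube_comp :: "nat set \<Rightarrow> (nat \<Rightarrow> dm) \<Rightarrow> (nat \<Rightarrow> dm) \<Rightarrow> nat \<Rightarrow> dm" where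
  "cube_comp K g f = (\<lambda>k. if k \<in> K then dm_subst f (g k) else undefined)"

text \<open>A cubical set with elements of type \<open>'a\<close>: \<open>Aob I\<close> is the set \<open>A(I)\<close>, and
  \<open>Aact I J f\<close> is the restriction map \<open>A(J) \<rightarrow> A(I)\<close> along \<open>f : I \<rightarrow> J\<close>.\<close>

definition cubical_set :: "(nat set \<Rightarrow> 'a set) \<Rightarrow> (nat set \<Rightarrow> nat set \<Rightarrow> (nat \<Rightarrow> dm) \<Rightarrow> 'a \<Rightarrow> 'a) \<Rightarrow> bool" where
  "cubical_set Aob Aact \<longleftrightarrow>
     (\<forall>I J f x. finite I \<and> finite J \<and> f \<in> cube_hom I J \<and> x \<in> Aob J \<longrightarrow> Aact I J f x \<in> Aob I) \<and>
     (\<forall>I x. finite I \<and> x \<in> Aob I \<longrightarrow> Aact I I (cube_id I) x = x) \<and>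
     (\<forall>I J K f g x. finite I \<and> finite J \<and> finite K \<and> f \<in> cube_hom I J \<and> g \<in> cube_hom J K
        \<and> x \<in> Aob K \<longrightarrow> Aact I K (cube_comp K g f) x = Aact I J f (Aact J K g x))"

text \<open>\<open>A \<cong> \<Delta>(a)\<close>: a natural isomorphism onto the constant presheaf on the set \<open>a\<close>
  (whose restriction maps are identities).\<close>

definition iso_to_constant :: "(nat set \<Rightarrow> 'a set) \<Rightarrow> (nat set \<Rightarrow> nat set \<Rightarrow> (nat \<Rightarrow> dm) \<Rightarrow> 'a \<Rightarrow> 'a)
    \<Rightarrow> 'b set \<Rightarrow> bool" where
  "iso_to_constant Aob Aact a \<longleftrightarrow>
     (\<exists>\<phi> :: nat set \<Rightarrow> 'a \<Rightarrow> 'b.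
        (\<forall>I. finite I \<longrightarrow> bij_betw (\<phi> I) (Aob I) a) \<and>
        (\<forall>I J f x. finite I \<and> finite J \<and> f \<in> cube_hom I J \<and> x \<in> Aob J
            \<longrightarrow> \<phi> I (Aact I J f x) = \<phi> J x))"

text \<open>An element of \<open>(\<I> \<Rightarrow> A)(K)\<close> is a natural transformation \<open>y(K) \<times> \<I> \<rightarrow> A\<close>:
  a family \<open>F L : Hom(L,K) \<times> dM L \<rightarrow> A(L)\<close>, natural in \<open>L\<close>.\<close>

definition exp_elem :: "(nat set \<Rightarrow> 'a set) \<Rightarrow> (nat set \<Rightarrow> nat set \<Rightarrow> (nat \<Rightarrow> dm) \<Rightarrow> 'a \<Rightarrow> 'a)
    \<Rightarrow> nat set \<Rightarrow> (nat set \<Rightarrow> (nat \<Rightarrow> dm) \<Rightarrow> dm \<Rightarrow> 'a) \<Rightarrow> bool" where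
  "exp_elem Aob Aact K F \<longleftrightarrow>
     (\<forall>L h u. finite L \<and> h \<in> cube_hom L K \<and> u \<in> dM L \<longrightarrow> F L h u \<in> Aob L) \<and>
     (\<forall>L L' g h u. finite L \<and> finite L' \<and> g \<in> cube_hom L' L \<and> h \<in> cube_hom L K \<and> u \<in> dM L
        \<longrightarrow> F L' (cube_comp K h g) (dm_subst g u) = Aact L' L g (F L h u))"

text \<open>Kripke--Joyal forcing of the closed formula
  \<open>\<forall>(i:\<I>) \<forall>(j:\<I>) \<forall>(f:\<I>\<rightarrow>A). f(i) = f(j)\<close>: at every stage \<open>K\<close>, for all
  \<open>i, j \<in> \<I>(K)\<close> and \<open>f \<in> A^\<I>(K)\<close>, the evaluations \<open>f(i) = F K id i\<close> and \<open>f(j)\<close> agree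
  in \<open>A(K)\<close>.\<close>

definition holds_const_formula :: "(nat set \<Rightarrow> 'a set) \<Rightarrow> (nat set \<Rightarrow> nat set \<Rightarrow> (nat \<Rightarrow> dm) \<Rightarrow> 'a \<Rightarrow> 'a) \<Rightarrow> bool" where
  "holds_const_formula Aob Aact \<longleftrightarrow>
     (\<forall>K i j F. finite K \<and> i \<in> dM K \<and> j \<in> dM K \<and> exp_elem Aob Aact K F
        \<longrightarrow> F K (cube_id K) i = F K (cube_id K) j)"

end

theory Submission
  imports Defs
begin

text \<open>If \<open>A \<cong> \<Delta>(a)\<close>, a path \<open>f : \<I> \<rightarrow> A\<close> at stage \<open>K\<close> has every value \<open>f(i)\<close> obtained by
  restricting its generic value \<open>f(n)\<close> at the stage \<open>K + n\<close> with a fresh name \<open>n\<close>; as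
  restrictions of a constant presheaf are identities, all values agree.
  Conversely, for \<open>x \<in> A(K)\<close> the connection \<open>u \<mapsto> x\<cdot>(k \<mapsto> k \<and> u)\<close> is a path from the
  restriction of \<open>x\<close> to the vertex \<open>0\<close> (at \<open>u = 0\<close>) to \<open>x\<close> itself (at \<open>u = 1\<close>). So the
  formula forces every \<open>x\<close> to be the degeneracy of its \<open>0\<close>-vertex, and restriction
  to that vertex is a natural bijection \<open>A(K) \<cong> A(\<emptyset>)\<close>.\<close>

lemma dm_abs_eq_iff: "abs_dm s = abs_dm t \<longleftrightarrow> dm_eq s t"
  using Quotient3_rel[OF Quotient3_dm] dm_eq.refl by metis

lemma dm_abs_rep: "abs_dm (rep_dm a) = a"
  by (rule Quotient3_abs_rep[OF Quotient3_dm])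

lemma dm_rep_abs: "dm_eq (rep_dm (abs_dm t)) t"
  using dm_abs_eq_iff dm_abs_rep by metis

lemma tsubst_dm_eq: "dm_eq s t \<Longrightarrow> dm_eq (tsubst \<sigma> s) (tsubst \<sigma> t)"
  by (induction rule: dm_eq.induct) (auto intro: dm_eq.intros)

lemma tsubst_cong_dm_eq:
  "(\<And>j. j \<in> tvars t \<Longrightarrow> dm_eq (\<sigma> j) (\<sigma>' j)) \<Longrightarrow> dm_eq (tsubst \<sigma> t) (tsubst \<sigma>' t)"
  by (induction t) (auto intro: dm_eq.intros)

lemma tvars_tsubst: "tvars (tsubst \<sigma> t) = (\<Union>j\<in>tvars t. tvars (\<sigma> j))"
  by (induction t) auto

lemma dm_subst_abs: "dm_subst \<sigma> (abs_dm t) = abs_dm (tsubst (rep_dm \<circ> \<sigma>) t)"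
  unfolding dm_subst_def dm_abs_eq_iff by (rule tsubst_dm_eq[OF dm_rep_abs])

lemma dm_subst_var: "dm_subst \<sigma> (dm_var k) = \<sigma> k"
  unfolding dm_var_def dm_subst_abs by (simp add: dm_abs_rep)

lemma abs_dm_in_dM: "tvars t \<subseteq> I \<Longrightarrow> abs_dm t \<in> dM I"
  unfolding dM_def by blast

lemma dm_var_in_dM: "k \<in> I \<Longrightarrow> dm_var k \<in> dM I"
  unfolding dm_var_def by (rule abs_dm_in_dM) simp

definition dm_zero :: dm where
  "dm_zero = abs_dm DZero"

definition dm_one :: dm where
  "dm_one = abs_dm DOne"

definition dm_meet :: "dm \<Rightarrow> dm \<Rightarrow> dm" where
  "dm_meet a b = abs_dm (DMeet (rep_dm a) (rep_dm b))"

lemma dm_zero_in_dM: "dm_zero \<in> dM I"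
  unfolding dm_zero_def by (rule abs_dm_in_dM) simp

lemma dm_one_in_dM: "dm_one \<in> dM I"
  unfolding dm_one_def by (rule abs_dm_in_dM) simp

lemma dm_meet_abs: "dm_meet (abs_dm s) (abs_dm t) = abs_dm (DMeet s t)"
  unfolding dm_meet_def dm_abs_eq_iff by (intro dm_eq.cong_meet dm_rep_abs)

lemma dm_meet_in_dM:
  assumes "a \<in> dM I" "b \<in> dM I"
  shows "dm_meet a b \<in> dM I"
proof -
  obtain s t where "a = abs_dm s" "tvars s \<subseteq> I" "b = abs_dm t" "tvars t \<subseteq> I"
    using assms unfolding dM_def by blast
  then show ?thesis
    using abs_dm_in_dM[of "DMeet s t" I] by (simp add: dm_meet_abs)
qed

lemma dm_meet_one: "dm_meet a dm_one = a"
  by (metis dm_abs_rep dm_one_def dm_meet_abs dm_abs_eq_iff dm_eq.meet_one)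

lemma dm_meet_zero: "dm_meet a dm_zero = dm_zero"
proof -
  have "dm_eq (DMeet t DZero) DZero" for t
  proof -
    have "dm_eq (DJoin DZero t) t"
      by (meson dm_eq.join_comm dm_eq.join_zero dm_eq.trans)
    then have "dm_eq (DMeet t DZero) (DMeet DZero (DJoin DZero t))"
      by (meson dm_eq.meet_comm dm_eq.trans dm_eq.cong_meet dm_eq.refl dm_eq.sym)
    then show ?thesis
      by (meson dm_eq.absorb_meet dm_eq.trans)
  qed
  then show ?thesis
    by (metis dm_abs_rep dm_zero_def dm_meet_abs dm_abs_eq_iff)
qed

lemma dm_subst_meet: "dm_subst g (dm_meet a b) = dm_meet (dm_subst g a) (dm_subst g b)"
proof -
  have "dm_subst g (dm_meet a b)
      = abs_dm (DMeet (tsubst (rep_dm \<circ> g) (rep_dm a)) (tsubst (rep_dm \<circ> g) (rep_dm b)))"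
    unfolding dm_meet_def dm_subst_abs by simp
  also have "\<dots> = dm_meet (dm_subst g a) (dm_subst g b)"
    unfolding dm_subst_def dm_meet_abs ..
  finally show ?thesis .
qed

lemma dm_subst_zero: "dm_subst g dm_zero = dm_zero"
  unfolding dm_zero_def dm_subst_abs by simp

lemma dm_subst_in_dM:
  assumes \<sigma>: "\<sigma> \<in> cube_hom I J" and x: "x \<in> dM J"
  shows "dm_subst \<sigma> x \<in> dM I"
proof -
  obtain t where t: "x = abs_dm t" "tvars t \<subseteq> J"
    using x unfolding dM_def by blast
  have "\<forall>j\<in>J. \<exists>s. tvars s \<subseteq> I \<and> abs_dm s = \<sigma> j"
    using \<sigma> unfolding cube_hom_def dM_def by force
  then obtain \<tau> where \<tau>: "\<And>j. j \<in> J \<Longrightarrow> tvars (\<tau> j) \<subseteq> I \<and> abs_dm (\<tau> j) = \<sigma> j"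
    by metis
  have "dm_eq (tsubst (rep_dm \<circ> \<sigma>) t) (tsubst \<tau> t)"
    by (rule tsubst_cong_dm_eq) (metis \<tau> t(2) comp_apply dm_abs_eq_iff dm_abs_rep subsetD)
  then have "dm_subst \<sigma> x = abs_dm (tsubst \<tau> t)"
    unfolding t dm_subst_abs dm_abs_eq_iff .
  moreover have "tvars (tsubst \<tau> t) \<subseteq> I"
    unfolding tvars_tsubst using \<tau> t(2) by blast
  ultimately show ?thesis
    using abs_dm_in_dM by simp
qed

lemma cube_comp_hom:
  "f \<in> cube_hom I J \<Longrightarrow> g \<in> cube_hom J K \<Longrightarrow> cube_comp K g f \<in> cube_hom I K"
  unfolding cube_hom_def[of I K] cube_comp_def
  using dm_subst_in_dM by (auto simp: cube_hom_def)

lemma cube_id_hom: "cube_id I \<in> cube_hom I I"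
  unfolding cube_hom_def cube_id_def by (auto intro: dm_var_in_dM)

lemma cube_id_hom_subset: "J \<subseteq> I \<Longrightarrow> cube_id J \<in> cube_hom I J"
  unfolding cube_hom_def cube_id_def by (auto intro: dm_var_in_dM)

lemma cube_hom_to_empty: "(\<lambda>_. undefined) \<in> cube_hom K {}"
  unfolding cube_hom_def by simp

lemma cube_comp_empty: "cube_comp {} g f = cube_id {}"
  unfolding cube_comp_def cube_id_def by simp

definition cube_vertex0 :: "nat set \<Rightarrow> nat \<Rightarrow> dm" where
  "cube_vertex0 K = (\<lambda>k. if k \<in> K then dm_zero else undefined)"

lemma cube_vertex0_hom: "cube_vertex0 K \<in> cube_hom {} K"
  unfolding cube_hom_def cube_vertex0_def by (auto intro: dm_zero_in_dM)

lemma cubical_set_act_mem: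
  "cubical_set Aob Aact \<Longrightarrow> finite I \<Longrightarrow> finite J \<Longrightarrow> f \<in> cube_hom I J \<Longrightarrow> x \<in> Aob J
    \<Longrightarrow> Aact I J f x \<in> Aob I"
  unfolding cubical_set_def by simp

lemma cubical_set_act_id:
  "cubical_set Aob Aact \<Longrightarrow> finite I \<Longrightarrow> x \<in> Aob I \<Longrightarrow> Aact I I (cube_id I) x = x"
  unfolding cubical_set_def by simp

lemma cubical_set_act_comp:
  "cubical_set Aob Aact \<Longrightarrow> finite I \<Longrightarrow> finite J \<Longrightarrow> finite K
    \<Longrightarrow> f \<in> cube_hom I J \<Longrightarrow> g \<in> cube_hom J K \<Longrightarrow> x \<in> Aob K
    \<Longrightarrow> Aact I K (cube_comp K g f) x = Aact I J f (Aact J K g x)"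
  unfolding cubical_set_def by simp

lemma exp_elem_mem:
  "exp_elem Aob Aact K F \<Longrightarrow> finite L \<Longrightarrow> h \<in> cube_hom L K \<Longrightarrow> u \<in> dM L
    \<Longrightarrow> F L h u \<in> Aob L"
  unfolding exp_elem_def by simp

lemma exp_elem_natural:
  "exp_elem Aob Aact K F \<Longrightarrow> finite L \<Longrightarrow> finite L' \<Longrightarrow> g \<in> cube_hom L' L
    \<Longrightarrow> h \<in> cube_hom L K \<Longrightarrow> u \<in> dM L
    \<Longrightarrow> F L' (cube_comp K h g) (dm_subst g u) = Aact L' L g (F L h u)"
  unfolding exp_elem_def by simp

lemma exp_elem_value_restrict_generic:
  assumes F: "exp_elem Aob Aact K F" and K: "finite K" and n: "n \<notin> K" and v: "v \<in> dM K"
  shows "\<exists>g \<in> cube_hom K (insert n K).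
           F K (cube_id K) v = Aact K (insert n K) g (F (insert n K) (cube_id K) (dm_var n))"
proof
  define g where "g = (\<lambda>k. if k \<in> K then dm_var k else if k = n then v else undefined)"
  show g: "g \<in> cube_hom K (insert n K)"
    unfolding g_def cube_hom_def using v by (auto intro: dm_var_in_dM)
  have "cube_comp K (cube_id K) g = cube_id K"
    unfolding cube_comp_def cube_id_def by (auto simp: dm_subst_var g_def)
  moreover have "dm_subst g (dm_var n) = v"
    by (simp add: dm_subst_var g_def n)
  moreover have "F K (cube_comp K (cube_id K) g) (dm_subst g (dm_var n))
      = Aact K (insert n K) g (F (insert n K) (cube_id K) (dm_var n))"
    by (rule exp_elem_natural[OF F _ K g cube_id_hom_subset])
      (use K in \<open>auto intro: dm_var_in_dM\<close>)
  ultimately show "F K (cube_id K) v = Aact K (insert n K) g (F (insert n K) (cube_id K) (dm_var n))"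
    by simp
qed

lemma iso_to_constant_imp_holds_const_formula:
  assumes "iso_to_constant Aob Aact a"
  shows "holds_const_formula Aob Aact"
  unfolding holds_const_formula_def
proof (intro allI impI, elim conjE)
  fix K i j F
  assume K: "finite K" and i: "i \<in> dM K" and j: "j \<in> dM K" and F: "exp_elem Aob Aact K F"
  obtain \<phi> where bij: "\<forall>I. finite I \<longrightarrow> bij_betw (\<phi> I) (Aob I) a"
    and nat: "\<forall>I J f x. finite I \<and> finite J \<and> f \<in> cube_hom I J \<and> x \<in> Aob J
            \<longrightarrow> \<phi> I (Aact I J f x) = \<phi> J x"
    using assms unfolding iso_to_constant_def by (elim exE conjE)
  obtain n where n: "n \<notin> K"
    using ex_new_if_finite[OF infinite_UNIV_nat K] by blast
  define generic where "generic = F (insert n K) (cube_id K) (dm_var n)"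
  have generic: "generic \<in> Aob (insert n K)"
    unfolding generic_def using K
    by (intro exp_elem_mem[OF F] cube_id_hom_subset) (auto intro: dm_var_in_dM)
  have \<phi>_value: "\<phi> K (F K (cube_id K) v) = \<phi> (insert n K) generic" if v: "v \<in> dM K" for v
  proof -
    obtain g where "g \<in> cube_hom K (insert n K)"
      and "F K (cube_id K) v = Aact K (insert n K) g generic"
      using exp_elem_value_restrict_generic[OF F K n v] unfolding generic_def by blast
    then show ?thesis
      using nat K generic by simp
  qed
  have "F K (cube_id K) i \<in> Aob K" "F K (cube_id K) j \<in> Aob K"
    using exp_elem_mem[OF F K cube_id_hom] i j by auto
  then show "F K (cube_id K) i = F K (cube_id K) j"
    using \<phi>_value[OF i] \<phi>_value[OF j] bij K unfolding bij_betw_def inj_on_def by simp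
qed

lemma cube_hom_meet:
  assumes "h \<in> cube_hom L K" "u \<in> dM L"
  shows "(\<lambda>k. if k \<in> K then dm_meet (h k) u else undefined) \<in> cube_hom L K"
  using assms unfolding cube_hom_def by (auto intro: dm_meet_in_dM)

lemma exp_elem_connection:
  assumes A: "cubical_set Aob Aact" and K: "finite K" and x: "x \<in> Aob K"
  shows "exp_elem Aob Aact K
           (\<lambda>L h u. Aact L K (\<lambda>k. if k \<in> K then dm_meet (h k) u else undefined) x)"
    (is "exp_elem _ _ _ (\<lambda>L h u. Aact L K (?m h u) x)")
  unfolding exp_elem_def
proof (intro conjI allI impI; elim conjE)
  fix L h u assume "finite L" "h \<in> cube_hom L K" "u \<in> dM L"
  then show "Aact L K (?m h u) x \<in> Aob L"
    using cubical_set_act_mem[OF A _ K cube_hom_meet x] by blast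
next
  fix L L' g h u
  assume L: "finite L" "finite L'" and g: "g \<in> cube_hom L' L"
    and h: "h \<in> cube_hom L K" and u: "u \<in> dM L"
  have "cube_comp K (?m h u) g = ?m (cube_comp K h g) (dm_subst g u)"
    unfolding cube_comp_def by (auto simp: dm_subst_meet)
  then show "Aact L' K (?m (cube_comp K h g) (dm_subst g u)) x = Aact L' L g (Aact L K (?m h u) x)"
    using cubical_set_act_comp[OF A L(2) L(1) K g cube_hom_meet[OF h u] x] by simp
qed

lemma holds_const_formula_degenerate_vertex0:
  assumes A: "cubical_set Aob Aact" and H: "holds_const_formula Aob Aact"
    and K: "finite K" and x: "x \<in> Aob K"
  shows "x = Aact K {} (\<lambda>_. undefined) (Aact {} K (cube_vertex0 K) x)"
proof -
  define F where
    "F = (\<lambda>L h u. Aact L K (\<lambda>k. if k \<in> K then dm_meet (h k) u else undefined) x)"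
  have "F K (cube_id K) dm_one = F K (cube_id K) dm_zero"
    using H K exp_elem_connection[OF A K x] dm_one_in_dM dm_zero_in_dM
    unfolding holds_const_formula_def F_def by blast
  moreover have "(\<lambda>k. if k \<in> K then dm_meet (cube_id K k) dm_one else undefined) = cube_id K"
    unfolding cube_id_def dm_meet_one by auto
  then have "F K (cube_id K) dm_one = x"
    unfolding F_def using cubical_set_act_id[OF A K x] by simp
  moreover have "(\<lambda>k. if k \<in> K then dm_meet (cube_id K k) dm_zero else undefined)
      = cube_comp K (cube_vertex0 K) (\<lambda>_. undefined)"
    unfolding cube_id_def cube_comp_def cube_vertex0_def by (auto simp: dm_meet_zero dm_subst_zero)
  then have "F K (cube_id K) dm_zero = Aact K {} (\<lambda>_. undefined) (Aact {} K (cube_vertex0 K) x)"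
    unfolding F_def
    using cubical_set_act_comp[OF A K _ K cube_hom_to_empty cube_vertex0_hom x] by simp
  ultimately show ?thesis
    by simp
qed

lemma holds_const_formula_imp_iso_to_constant:
  assumes A: "cubical_set Aob Aact" and H: "holds_const_formula Aob Aact"
  shows "iso_to_constant Aob Aact (Aob {})"
proof -
  define \<phi> where "\<phi> = (\<lambda>I x. Aact {} I (cube_vertex0 I) x)"
  define deg :: "nat \<Rightarrow> dm" where "deg = (\<lambda>_. undefined)"
  have deg: "deg \<in> cube_hom K {}" for K
    unfolding deg_def by (rule cube_hom_to_empty)
  have \<phi>_mem: "\<phi> K x \<in> Aob {}" if "finite K" "x \<in> Aob K" for K x
    unfolding \<phi>_def using cubical_set_act_mem[OF A] that cube_vertex0_hom by blast
  have degenerate: "x = Aact K {} deg (\<phi> K x)" if "finite K" "x \<in> Aob K" for K x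
    unfolding \<phi>_def deg_def using holds_const_formula_degenerate_vertex0[OF A H that] .
  have restrict_deg: "Aact {} K v (Aact K {} deg b) = b"
    if K: "finite K" and v: "v \<in> cube_hom {} K" and b: "b \<in> Aob {}" for K v b
    using cubical_set_act_comp[OF A _ K _ v deg b] cubical_set_act_id[OF A _ b]
    by (simp add: cube_comp_empty)
  have "bij_betw (\<phi> I) (Aob I) (Aob {})" if I: "finite I" for I
  proof (rule bij_betwI')
    show "\<phi> I x = \<phi> I y \<longleftrightarrow> x = y" if "x \<in> Aob I" "y \<in> Aob I" for x y
      using degenerate[OF I that(1)] degenerate[OF I that(2)] by metis
    show "\<phi> I x \<in> Aob {}" if "x \<in> Aob I" for x
      using \<phi>_mem I that .
    show "\<exists>x\<in>Aob I. b = \<phi> I x" if "b \<in> Aob {}" for b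
      using that cubical_set_act_mem[OF A I _ deg] restrict_deg[OF I cube_vertex0_hom]
      unfolding \<phi>_def by (metis finite.emptyI)
  qed
  moreover have "\<phi> I (Aact I J f x) = \<phi> J x"
    if I: "finite I" and J: "finite J" and f: "f \<in> cube_hom I J" and x: "x \<in> Aob J" for I J f x
  proof -
    have v: "cube_comp J f (cube_vertex0 I) \<in> cube_hom {} J"
      using cube_comp_hom[OF cube_vertex0_hom f] .
    have "\<phi> I (Aact I J f x) = Aact {} J (cube_comp J f (cube_vertex0 I)) x"
      unfolding \<phi>_def using cubical_set_act_comp[OF A _ I J cube_vertex0_hom f x] by simp
    also have "\<dots> = \<phi> J x"
      using restrict_deg[OF J v \<phi>_mem[OF J x]] degenerate[OF J x] by metis
    finally show ?thesis .
  qed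
  ultimately show ?thesis
    unfolding iso_to_constant_def by blast
qed

theorem mainTheorem5:
  fixes Aob :: "nat set \<Rightarrow> 'a set"
    and Aact :: "nat set \<Rightarrow> nat set \<Rightarrow> (nat \<Rightarrow> dm) \<Rightarrow> 'a \<Rightarrow> 'a"
  assumes "cubical_set Aob Aact"
  shows "holds_const_formula Aob Aact \<longleftrightarrow> (\<exists>a :: 'a set. iso_to_constant Aob Aact a)"
  using iso_to_constant_imp_holds_const_formula holds_const_formula_imp_iso_to_constant assms
  by blast

end
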